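(* In the setting described in the context, suppose a gradient step is taken on the repeated example $(\mathbf{z}^{\mathrm{mem}},\mathbf{e}^{\mathrm{mem}})$ at step $i$, and then $m$ gradient steps are taken on non-repeated examples $(\mathbf{z}^{(i+1)},\mathbf{e}^{(i+1)}),\dots,(\mathbf{z}^{(i+m)},\mathbf{e}^{(i+m)})$. Then $$(\mathbf{e}^{\mathrm{mem}})^\top f^{(i+m)}(\mathbf{z}^{\mathrm{mem}})\ \le\ (\mathbf{e}^{\mathrm{mem}})^\top f^{(i)}(\mathbf{z}^{\mathrm{mem}})-\gamma\, m\,\epsilon\, c_{\min}.$$
   Context: Model: $f(\mathbf{z})=\mathbf{W}_{\mathrm{proj}}\mathbf{z}\in\mathbb{R}^{V}$ (logits over a vocabulary of size $V\ge2$), where $\mathbf{z}=\mathbf{z}(\mathbf{s})$ is the (fixed, since the first layer is frozen) hidden activation of sequence $\mathbf{s}$; $f^{(t)}$ denotes the model with parameter $\mathbf{W}_{\mathrm{proj}}^{(t)}$ after the $t$-th update. Training: batch size 1, cross-entropy loss with softmax $\sigma$, learning rate $\gamma>0$; an update on example $(\mathbf{z},\mathbf{e})$ is $\mathbf{W}_{\mathrm{proj}}\leftarrow\mathbf{W}_{\mathrm{proj}}+\gamma(\mathbf{e}-\sigma(f(\mathbf{z})))\mathbf{z}^\top$. Next-token targets $\mathbf{e}$ are one-hot (standard basis) vectors in $\mathbb{R}^V$; each non-repeated example has target $\mathbf{e}^{(j)}\neq\mathbf{e}^{\mathrm{mem}}$. Assumptions: $\|\mathbf{z}\|_2=1$ for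 all activations; $\|\mathbf{W}_{\mathrm{proj}}\|_2<C_{\mathrm{proj}}/2$ throughout training; $\mathbf{z}^{(j)\top}\mathbf{z}^{\mathrm{mem}}\ge\epsilon>0$ for all non-repeated examples $j$. Constant: $c_{\min}=\exp(-C_{\mathrm{proj}})/V$. *)

theory Defs
  imports "HOL-Analysis.Analysis"
begin

definition softmax :: "real ^ 'v \<Rightarrow> real ^ 'v" where
  "softmax x = (\<chi> k. exp (x $ k) / (\<Sum>j\<in>UNIV. exp (x $ j)))"

definition outer :: "real ^ 'v \<Rightarrow> real ^ 'd \<Rightarrow> real ^ 'd ^ 'v" where
  "outer u v = (\<chi> a b. u $ a * v $ b)"

text \<open>One gradient step of cross-entropy with batch size 1.\<close>
definition gd_step :: "real \<Rightarrow> real ^ 'd ^ 'v \<Rightarrow> real ^ 'd \<Rightarrow> real ^ 'v \<Rightarrow> real ^ 'd ^ 'v" where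
  "gd_step \<gamma> W z e = W + \<gamma> *\<^sub>R outer (e - softmax (W *v z)) z"

definition one_hot :: "real ^ 'v \<Rightarrow> bool" where
  "one_hot e \<longleftrightarrow> (\<exists>k. e = axis k 1)"

definition spec_norm :: "real ^ 'd ^ 'v \<Rightarrow> real" where
  "spec_norm W = onorm (\<lambda>x. W *v x)"

definition c_min :: "real \<Rightarrow> nat \<Rightarrow> real" where
  "c_min C V = exp (- C) / real V"

end

theory Submission
  imports Defs
begin

text \<open>A step on an example with one-hot target \<open>e \<noteq> e_mem\<close> changes the memorised logit
  \<open>e_mem \<bullet> f(z_mem)\<close> by \<open>-\<gamma> (z \<bullet> z_mem) \<sigma>(f z)\<^sub>k\<close>, where \<open>e_mem\<close> is the \<open>k\<close>-th basis vector.
  Since \<open>\<parallel>W\<parallel> < C/2\<close> and \<open>\<parallel>z\<parallel> = 1\<close>, every logit lies in \<open>(-C/2, C/2)\<close>, so every softmax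
  probability is at least \<open>exp(-C)/V = c_min\<close>; together with \<open>z \<bullet> z_mem \<ge> \<epsilon>\<close> each of the
  \<open>m\<close> steps lowers the memorised logit by at least \<open>\<gamma> \<epsilon> c_min\<close>.\<close>

lemma outer_mult_vec: "outer u v *v w = (v \<bullet> w) *\<^sub>R u"
  by (simp add: outer_def matrix_vector_mult_def vec_eq_iff inner_vec_def
      sum_distrib_left mult.commute mult.left_commute)

lemma abs_component_le_spec_norm:
  fixes W :: "real ^ 'd::finite ^ 'v::finite"
  shows "\<bar>(W *v z) $ j\<bar> \<le> spec_norm W * norm z"
proof -
  have "bounded_linear (\<lambda>x. W *v x)"
    using matrix_vector_mul_linear linear_linear by blast
  then have "norm (W *v z) \<le> spec_norm W * norm z"
    unfolding spec_norm_def by (rule onorm)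
  then show ?thesis
    using component_le_norm_cart order_trans by blast
qed

lemma softmax_component_ge:
  fixes x :: "real ^ 'v::finite"
  assumes bounded: "\<And>j. \<bar>x $ j\<bar> \<le> B"
  shows "exp (- 2 * B) / real CARD('v) \<le> softmax x $ k"
proof -
  have "exp (- B) \<le> exp (x $ k)"
    using bounded[of k] by simp
  moreover have "exp (x $ j) \<le> exp B" for j
    using bounded[of j] by simp
  then have "(\<Sum>j\<in>UNIV. exp (x $ j)) \<le> real CARD('v) * exp B"
    using sum_bounded_above[of UNIV "\<lambda>j. exp (x $ j)" "exp B"] by simp
  moreover have "0 < (\<Sum>j\<in>UNIV. exp (x $ j))"
    by (simp add: sum_pos)
  ultimately have "exp (- B) / (real CARD('v) * exp B) \<le> softmax x $ k"
    unfolding softmax_def by (simp add: frac_le)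
  moreover have "exp (- B) / (real CARD('v) * exp B) = exp (- 2 * B) / real CARD('v)"
    by (simp add: field_simps flip: exp_add)
  ultimately show ?thesis by simp
qed

lemma c_min_le_softmax:
  fixes W :: "real ^ 'd::finite ^ 'v::finite"
  assumes "spec_norm W < C / 2" and "norm z = 1"
  shows "c_min C CARD('v) \<le> softmax (W *v z) $ k"
proof -
  have "\<bar>(W *v z) $ j\<bar> \<le> C / 2" for j
    using abs_component_le_spec_norm[of W z j] assms by simp
  then show ?thesis
    using softmax_component_ge[of "W *v z" "C / 2" k] by (simp add: c_min_def)
qed

lemma inner_gd_step_mult:
  "u \<bullet> (gd_step \<gamma> W z e *v y)
     = u \<bullet> (W *v y) + \<gamma> * (z \<bullet> y) * (u \<bullet> e - u \<bullet> softmax (W *v z))"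
  by (simp add: gd_step_def matrix_vector_mult_add_rdistrib outer_mult_vec
      inner_diff_right algebra_simps flip: scaleR_matrix_vector_assoc)

lemma gd_step_lowers_other_logit:
  fixes W :: "real ^ 'd::finite ^ 'v::finite"
  assumes "spec_norm W < C / 2" and "norm z = 1"
    and "one_hot e" and "one_hot e'" and "e \<noteq> e'"
    and "\<epsilon> \<le> z \<bullet> y" and "0 < \<epsilon>" and "0 < \<gamma>"
  shows "e' \<bullet> (gd_step \<gamma> W z e *v y) \<le> e' \<bullet> (W *v y) - \<gamma> * \<epsilon> * c_min C CARD('v)"
proof -
  obtain k where k: "e' = axis k 1"
    using \<open>one_hot e'\<close> unfolding one_hot_def by blast
  obtain l where "e = axis l 1"
    using \<open>one_hot e\<close> unfolding one_hot_def by blast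
  with k \<open>e \<noteq> e'\<close> have "e' \<bullet> e = 0"
    by (auto simp: inner_axis_axis)
  moreover have "e' \<bullet> softmax (W *v z) = softmax (W *v z) $ k"
    using k by (simp add: inner_axis')
  ultimately have step: "e' \<bullet> (gd_step \<gamma> W z e *v y)
      = e' \<bullet> (W *v y) - \<gamma> * ((z \<bullet> y) * softmax (W *v z) $ k)"
    by (simp add: inner_gd_step_mult)
  have "\<epsilon> * c_min C CARD('v) \<le> (z \<bullet> y) * softmax (W *v z) $ k"
    using c_min_le_softmax[OF assms(1,2)] assms(6,7)
    by (intro mult_mono) (auto simp: c_min_def)
  with \<open>0 < \<gamma>\<close> show ?thesis
    unfolding step by (simp add: mult.assoc)
qed

lemma decrements_telescope:
  fixes f :: "nat \<Rightarrow> real"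
  assumes "\<And>n. n < m \<Longrightarrow> f (Suc n) \<le> f n - d"
  shows "f m \<le> f 0 - real m * d"
  using assms by (induction m) (force simp: algebra_simps)+

theorem theoremG2:
  fixes W :: "nat \<Rightarrow> real ^ 'd::finite ^ 'v::finite"
    and z :: "nat \<Rightarrow> real ^ 'd" and e :: "nat \<Rightarrow> real ^ 'v"
    and z_mem :: "real ^ 'd" and e_mem :: "real ^ 'v"
    and \<gamma> C_proj \<epsilon> :: real and i m :: nat
  assumes V2: "CARD('v) \<ge> 2"
    and gamma_pos: "\<gamma> > 0"
    and i_pos: "i \<ge> 1"
    and mem_step: "W i = gd_step \<gamma> (W (i - 1)) z_mem e_mem"
    and steps: "\<And>t. i + 1 \<le> t \<Longrightarrow> t \<le> i + m \<Longrightarrow> W t = gd_step \<gamma> (W (t - 1)) (z t) (e t)"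
    and mem_onehot: "one_hot e_mem"
    and onehot: "\<And>t. i + 1 \<le> t \<Longrightarrow> t \<le> i + m \<Longrightarrow> one_hot (e t) \<and> e t \<noteq> e_mem"
    and z_mem_norm: "norm z_mem = 1"
    and z_norm: "\<And>t. norm (z t) = 1"
    and W_bound: "\<And>t. spec_norm (W t) < C_proj / 2"
    and eps_pos: "\<epsilon> > 0"
    and overlap: "\<And>t. i + 1 \<le> t \<Longrightarrow> t \<le> i + m \<Longrightarrow> z t \<bullet> z_mem \<ge> \<epsilon>"
  shows "e_mem \<bullet> (W (i + m) *v z_mem)
           \<le> e_mem \<bullet> (W i *v z_mem) - \<gamma> * real m * \<epsilon> * c_min C_proj CARD('v)"
proof -
  let ?logit = "\<lambda>n. e_mem \<bullet> (W (i + n) *v z_mem)"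
  have "?logit (Suc n) \<le> ?logit n - \<gamma> * \<epsilon> * c_min C_proj CARD('v)" if "n < m" for n
  proof -
    have t: "i + 1 \<le> i + Suc n" "i + Suc n \<le> i + m"
      using that by auto
    then have "W (i + Suc n) = gd_step \<gamma> (W (i + n)) (z (i + Suc n)) (e (i + Suc n))"
      using steps by simp
    then show ?thesis
      using gd_step_lowers_other_logit[OF W_bound z_norm _ mem_onehot _ overlap[OF t]
          eps_pos gamma_pos] onehot[OF t] by simp
  qed
  from decrements_telescope[of m ?logit, OF this] show ?thesis
    by (simp add: algebra_simps)
qed

end
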